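(* Let $T=(V,E)$ be a tree with $\mathrm{pthin}(T)=2$, and let $\sigma$ be an ordering of $V$ and $S=\{V^0,V^1\}$ a partition of $V$ that are strongly consistent. Let $v_1,v_2,v_3,v_4$ be vertices forming a path $v_1v_2v_3v_4$ (with $v_1v_2,v_2v_3,v_3v_4\in E$) whose classes alternate, i.e. $v_1,v_3$ lie in one class and $v_2,v_4$ in the other. Then it is not the case that $v_1<v_3$ and $v_4<v_2$, and it is not the case that $v_3<v_1$ and $v_2<v_4$.
   Context: For a graph $G=(V,E)$, a linear ordering $<$ of $V$ and a partition of $V$ into classes are called strongly consistent if for every triple $r<s<t$ of vertices with $rt\in E$: if $r$ and $s$ belong to the same class then $st\in E$, and if $s$ and $t$ belong to the same class then $rs\in E$. The proper thinness $\mathrm{pthin}(G)$ is the minimum $k$ such that some ordering and some partition into $k$ classes are strongly consistent. *)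

theory Defs
  imports Main "HOL-Library.Disjoint_Sets"
begin

definition simple_graph :: "'a set \<Rightarrow> ('a \<Rightarrow> 'a \<Rightarrow> bool) \<Rightarrow> bool" where
  "simple_graph V E \<longleftrightarrow> finite V \<and> (\<forall>u v. E u v \<longrightarrow> E v u) \<and> (\<forall>v. \<not> E v v)
     \<and> (\<forall>u v. E u v \<longrightarrow> u \<in> V \<and> v \<in> V)"

definition is_walk :: "'a set \<Rightarrow> ('a \<Rightarrow> 'a \<Rightarrow> bool) \<Rightarrow> 'a list \<Rightarrow> bool" where
  "is_walk V E xs \<longleftrightarrow> xs \<noteq> [] \<and> set xs \<subseteq> V \<and> (\<forall>i. Suc i < length xs \<longrightarrow> E (xs ! i) (xs ! Suc i))"

definition connected_graph :: "'a set \<Rightarrow> ('a \<Rightarrow> 'a \<Rightarrow> bool) \<Rightarrow> bool" where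
  "connected_graph V E \<longleftrightarrow> V \<noteq> {} \<and>
     (\<forall>u\<in>V. \<forall>v\<in>V. \<exists>xs. is_walk V E xs \<and> hd xs = u \<and> last xs = v)"

definition has_cycle :: "'a set \<Rightarrow> ('a \<Rightarrow> 'a \<Rightarrow> bool) \<Rightarrow> bool" where
  "has_cycle V E \<longleftrightarrow> (\<exists>xs. is_walk V E xs \<and> distinct xs \<and> length xs \<ge> 3 \<and> E (last xs) (hd xs))"

definition is_tree :: "'a set \<Rightarrow> ('a \<Rightarrow> 'a \<Rightarrow> bool) \<Rightarrow> bool" where
  "is_tree V E \<longleftrightarrow> simple_graph V E \<and> connected_graph V E \<and> \<not> has_cycle V E"

definition linear_ordering :: "'a set \<Rightarrow> ('a \<Rightarrow> 'a \<Rightarrow> bool) \<Rightarrow> bool" where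
  "linear_ordering V lt \<longleftrightarrow>
     (\<forall>x\<in>V. \<not> lt x x) \<and>
     (\<forall>x\<in>V. \<forall>y\<in>V. \<forall>z\<in>V. lt x y \<longrightarrow> lt y z \<longrightarrow> lt x z) \<and>
     (\<forall>x\<in>V. \<forall>y\<in>V. x \<noteq> y \<longrightarrow> lt x y \<or> lt y x)"

definition same_class :: "'a set set \<Rightarrow> 'a \<Rightarrow> 'a \<Rightarrow> bool" where
  "same_class P x y \<longleftrightarrow> (\<exists>X\<in>P. x \<in> X \<and> y \<in> X)"

definition strongly_consistent ::
  "'a set \<Rightarrow> ('a \<Rightarrow> 'a \<Rightarrow> bool) \<Rightarrow> ('a \<Rightarrow> 'a \<Rightarrow> bool) \<Rightarrow> 'a set set \<Rightarrow> bool" where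
  "strongly_consistent V E lt P \<longleftrightarrow>
     (\<forall>r\<in>V. \<forall>s\<in>V. \<forall>t\<in>V. lt r s \<and> lt s t \<and> E r t \<longrightarrow>
        (same_class P r s \<longrightarrow> E s t) \<and> (same_class P s t \<longrightarrow> E r s))"

definition pthin :: "'a set \<Rightarrow> ('a \<Rightarrow> 'a \<Rightarrow> bool) \<Rightarrow> nat" where
  "pthin V E = (LEAST k. \<exists>lt P. linear_ordering V lt \<and> partition_on V P \<and> card P = k
                    \<and> strongly_consistent V E lt P)"

end

(* In a strongly consistent ordering, an edge rt with r < t forbids any vertex s strictly between
   them that lies in the class of one end and is not adjacent to the other end.  Now let ab and cd be
   edges with a, c in one class, b, d in the other, and a < c, d < b.  If d < a, then a lies between
   d and c in the class of c, forcing the edge ad; if a < d, then d lies between a and b in the class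
   of b, again forcing ad.  On the path v1 v2 v3 v4 of a tree the edge v1 v4 would close a cycle, which
   excludes v1 < v3, v4 < v2; the other configuration is the same one for the reversed ordering, which
   is again strongly consistent. *)

theory Submission
  imports Defs
begin

lemma is_walk_Cons_Cons:
  "is_walk V E (x # y # xs) \<longleftrightarrow> x \<in> V \<and> E x y \<and> is_walk V E (y # xs)"
  by (auto simp: is_walk_def nth_Cons split: nat.splits)

lemma is_walk_singleton: "is_walk V E [x] \<longleftrightarrow> x \<in> V"
  by (simp add: is_walk_def)

lemma tree_no_closing_edge:
  assumes "is_tree V E" "is_walk V E xs" "distinct xs" "length xs \<ge> 3"
  shows "\<not> E (last xs) (hd xs)"
  using assms by (auto simp: is_tree_def has_cycle_def)

lemma symp_if_simple_graph: "simple_graph V E \<Longrightarrow> symp E"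
  by (auto simp: simple_graph_def intro: sympI)

lemma same_class_commute: "same_class P x y \<longleftrightarrow> same_class P y x"
  by (auto simp: same_class_def)

lemma linear_ordering_converse:
  "linear_ordering V lt \<Longrightarrow> linear_ordering V (\<lambda>x y. lt y x)"
  unfolding linear_ordering_def by blast

lemma strongly_consistent_converse:
  assumes "strongly_consistent V E lt P" "symp E"
  shows "strongly_consistent V E (\<lambda>x y. lt y x) P"
  unfolding strongly_consistent_def
proof (intro ballI impI conjI; elim conjE)
  fix r s t assume "r \<in> V" "s \<in> V" "t \<in> V" "lt s r" "lt t s" "E r t"
  moreover have "E t r" using \<open>E r t\<close> \<open>symp E\<close> by (blast dest: sympD)
  ultimately have "(same_class P t s \<longrightarrow> E s r) \<and> (same_class P s r \<longrightarrow> E t s)"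
    using assms(1) unfolding strongly_consistent_def by blast
  then show "same_class P r s \<Longrightarrow> E s t" "same_class P s t \<Longrightarrow> E r s"
    using \<open>symp E\<close> by (auto simp: same_class_commute dest: sympD)
qed

lemma strongly_consistent_right_class:
  "\<lbrakk>strongly_consistent V E lt P; r \<in> V; s \<in> V; t \<in> V; lt r s; lt s t; E r t;
    same_class P s t\<rbrakk> \<Longrightarrow> E r s"
  unfolding strongly_consistent_def by blast

lemma strongly_consistent_no_crossing:
  assumes sc: "strongly_consistent V E lt P" and lin: "linear_ordering V lt" and "symp E"
    and V: "a \<in> V" "b \<in> V" "c \<in> V" "d \<in> V" and "a \<noteq> d"
    and E: "E a b" "E c d" "\<not> E a d"
    and cls: "same_class P a c" "same_class P b d"
    and "lt a c" "lt d b"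
  shows False
proof -
  consider "lt d a" | "lt a d"
    using lin V(1,4) \<open>a \<noteq> d\<close> unfolding linear_ordering_def by blast
  then show False
  proof cases
    case 1
    have "E d c"
      using \<open>symp E\<close> \<open>E c d\<close> by (blast dest: sympD)
    then have "E d a"
      using strongly_consistent_right_class[OF sc V(4,1,3) 1 \<open>lt a c\<close>] cls(1) by blast
    with E(3) \<open>symp E\<close> show False by (blast dest: sympD)
  next
    case 2
    have "same_class P d b"
      using cls(2) same_class_commute by metis
    then have "E a d"
      using strongly_consistent_right_class[OF sc V(1,4,2) 2 \<open>lt d b\<close> E(1)] by blast
    with E(3) show False by blast
  qed
qed

theorem propositionA12:
  fixes V :: "'a set" and E :: "'a \<Rightarrow> 'a \<Rightarrow> bool" and lt :: "'a \<Rightarrow> 'a \<Rightarrow> bool"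
    and V0 V1 :: "'a set" and v1 v2 v3 v4 :: 'a
  assumes "is_tree V E"
    and "pthin V E = 2"
    and "linear_ordering V lt"
    and "partition_on V {V0, V1}" and "V0 \<noteq> V1"
    and "strongly_consistent V E lt {V0, V1}"
    and "v1 \<in> V" "v2 \<in> V" "v3 \<in> V" "v4 \<in> V"
    and "distinct [v1, v2, v3, v4]"
    and "E v1 v2" "E v2 v3" "E v3 v4"
    and "(v1 \<in> V0 \<and> v3 \<in> V0 \<and> v2 \<in> V1 \<and> v4 \<in> V1) \<or>
         (v1 \<in> V1 \<and> v3 \<in> V1 \<and> v2 \<in> V0 \<and> v4 \<in> V0)"
  shows "\<not> (lt v1 v3 \<and> lt v4 v2) \<and> \<not> (lt v3 v1 \<and> lt v2 v4)"
proof -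
  have "symp E"
    using assms(1) unfolding is_tree_def by (blast intro: symp_if_simple_graph)
  have "is_walk V E [v1, v2, v3, v4]"
    using assms(7-14) by (simp only: is_walk_Cons_Cons is_walk_singleton)
  from tree_no_closing_edge[OF assms(1) this] have "\<not> E v4 v1"
    using assms(11) by simp
  then have no_chord: "\<not> E v1 v4"
    using \<open>symp E\<close> by (blast dest: sympD)
  have classes: "same_class {V0, V1} v1 v3" "same_class {V0, V1} v2 v4"
    using assms(15) by (auto simp: same_class_def)
  have "v1 \<noteq> v4"
    using assms(11) by simp
  note crossing = strongly_consistent_no_crossing[OF _ _ \<open>symp E\<close> assms(7-10) \<open>v1 \<noteq> v4\<close>
      assms(12,14) no_chord classes]
  show ?thesis
    using crossing[OF assms(6,3)]
      crossing[OF strongly_consistent_converse[OF assms(6) \<open>symp E\<close>]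
                  linear_ordering_converse[OF assms(3)]]
    by blast
qed

end
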